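(* (i) For $x\notin\bigcup_{q\ge1}\mathrm{Fix}_q(\sigma)^\circ$, $\omega_x$ is a hermitian character of $C(X)'_{00}$ which is continuous in the topology induced by the norm of $\ell^1(\Sigma)$. (ii) Let $x\in\bigcup_{q\ge1}\mathrm{Fix}_q(\sigma)^\circ$ and $c\in\mathbb{C}\setminus\{0\}$. Then the following are equivalent: (a) $\omega_{x,c}$ is continuous on $C(X)'_{00}$ in the topology induced by $\ell^1(\Sigma)$; (b) $\omega_{x,c}$ is a hermitian character of $C(X)'_{00}$; (c) $c\in\mathbb{T}$.
   Context: Let $X$ be a non-empty compact Hausdorff space and $\sigma:X\to X$ a homeomorphism; $\mathrm{Fix}_k(\sigma)=\{x:\sigma^kx=x\}$, superscript $\circ$ denotes interior, $\mathrm{supp}(f)$ the closure of $\{f\ne0\}$. $C(X)$ is the algebra of continuous complex functions with sup norm, $\alpha(f)=f\circ\sigma^{-1}$. $\ell^1(\Sigma)$ is the set of $\ell:\mathbb{Z}\to C(X)$ with $\|\ell\|=\sum_k\|\ell(k)\|_\infty<\infty$, product $(\ell\ell')(n)=\sum_k\ell(k)\alpha^k(\ell'(n-k))$, involution $\ell^*(n)=\overline{\alpha^n(\ell(-n))}$; elements are written $\sum_kf_k\delta^k$ with $f_k=\ell(k)$, and $C(X)$ is embedded as $\{f\delta^0\}$. $c_{00}(\Sigma)$ is the $*$-subalgebra of finite sums and $C(X)'_{00}$ is the commutant of $C(X)$ in it, equal to $\{\sum_kf_k\delta^k\in c_{00}(\Sigma):\mathrm{supp}(f_k)\subset\mathrm{Fix}_k(\sigma)\}$.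 For $x\notin\bigcup_{q\ge1}\mathrm{Fix}_q(\sigma)^\circ$, $\omega_x(\sum_kf_k\delta^k)=f_0(x)$; for $x\in\bigcup_{q\ge1}\mathrm{Fix}_q(\sigma)^\circ$ and $c\ne0$, $\omega_{x,c}(\sum_kf_k\delta^k)=\sum_jf_{jn}(x)c^j$, with $n$ the minimal $n\ge1$ such that $x\in\mathrm{Fix}_n(\sigma)^\circ$; these are characters of $C(X)'_{00}$. A character $\omega$ is hermitian if $\omega(a^* )=\overline{\omega(a)}$ for all $a$. *)

theory Defs
  imports "HOL-Analysis.Analysis"
begin

type_synonym 'a l1elem = "int \<Rightarrow> 'a \<Rightarrow> complex"

definition sigma_pow :: "('a \<Rightarrow> 'a) \<Rightarrow> int \<Rightarrow> 'a \<Rightarrow> 'a" where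
  "sigma_pow \<sigma> k = (if k \<ge> 0 then \<sigma> ^^ nat k else (inv \<sigma>) ^^ nat (- k))"

definition alpha_pow :: "('a \<Rightarrow> 'a) \<Rightarrow> int \<Rightarrow> ('a \<Rightarrow> complex) \<Rightarrow> ('a \<Rightarrow> complex)" where
  "alpha_pow \<sigma> k f = f \<circ> sigma_pow \<sigma> (- k)"

definition Fix :: "('a \<Rightarrow> 'a) \<Rightarrow> int \<Rightarrow> 'a set" where
  "Fix \<sigma> k = {x. sigma_pow \<sigma> k x = x}"

definition FixInt :: "('a::topological_space \<Rightarrow> 'a) \<Rightarrow> 'a set" where
  "FixInt \<sigma> = (\<Union>q\<in>{q::int. q \<ge> 1}. interior (Fix \<sigma> q))"

definition supp :: "('a::topological_space \<Rightarrow> complex) \<Rightarrow> 'a set" where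
  "supp f = closure {x. f x \<noteq> 0}"

definition coeff_support :: "'a l1elem \<Rightarrow> int set" where
  "coeff_support l = {k. l k \<noteq> (\<lambda>_. 0)}"

definition sup_norm :: "('a \<Rightarrow> complex) \<Rightarrow> real" where
  "sup_norm f = (SUP x. cmod (f x))"

text \<open>The l1 norm (for finitely supported elements the sum is finite).\<close>
definition l1_norm :: "'a l1elem \<Rightarrow> real" where
  "l1_norm l = (\<Sum>k\<in>coeff_support l. sup_norm (l k))"

definition c00 :: "'a::topological_space l1elem set" where
  "c00 = {l. finite (coeff_support l) \<and> (\<forall>k. continuous_on UNIV (l k))}"

text \<open>The commutant C(X)'_00, in the explicit form given in the context.\<close>
definition C00' :: "('a::topological_space \<Rightarrow> 'a) \<Rightarrow> 'a l1elem set" where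
  "C00' \<sigma> = {l \<in> c00. \<forall>k. supp (l k) \<subseteq> Fix \<sigma> k}"

definition l1_add :: "'a l1elem \<Rightarrow> 'a l1elem \<Rightarrow> 'a l1elem" where
  "l1_add a b = (\<lambda>k x. a k x + b k x)"

definition l1_diff :: "'a l1elem \<Rightarrow> 'a l1elem \<Rightarrow> 'a l1elem" where
  "l1_diff a b = (\<lambda>k x. a k x - b k x)"

definition l1_scale :: "complex \<Rightarrow> 'a l1elem \<Rightarrow> 'a l1elem" where
  "l1_scale c a = (\<lambda>k x. c * a k x)"

definition l1_mult :: "('a \<Rightarrow> 'a) \<Rightarrow> 'a l1elem \<Rightarrow> 'a l1elem \<Rightarrow> 'a l1elem" where
  "l1_mult \<sigma> a b = (\<lambda>n x. \<Sum>k\<in>coeff_support a. a k x * alpha_pow \<sigma> k (b (n - k)) x)"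

definition l1_star :: "('a \<Rightarrow> 'a) \<Rightarrow> 'a l1elem \<Rightarrow> 'a l1elem" where
  "l1_star \<sigma> a = (\<lambda>n x. cnj (alpha_pow \<sigma> n (a (- n)) x))"

definition is_character :: "('a \<Rightarrow> 'a) \<Rightarrow> 'a l1elem set \<Rightarrow> ('a l1elem \<Rightarrow> complex) \<Rightarrow> bool" where
  "is_character \<sigma> A \<omega> \<longleftrightarrow>
     (\<forall>a\<in>A. \<forall>b\<in>A. \<omega> (l1_add a b) = \<omega> a + \<omega> b) \<and>
     (\<forall>c. \<forall>a\<in>A. \<omega> (l1_scale c a) = c * \<omega> a) \<and>
     (\<forall>a\<in>A. \<forall>b\<in>A. \<omega> (l1_mult \<sigma> a b) = \<omega> a * \<omega> b) \<and>
     (\<exists>a\<in>A. \<omega> a \<noteq> 0)"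

definition is_hermitian_character :: "('a \<Rightarrow> 'a) \<Rightarrow> 'a l1elem set \<Rightarrow> ('a l1elem \<Rightarrow> complex) \<Rightarrow> bool" where
  "is_hermitian_character \<sigma> A \<omega> \<longleftrightarrow>
     is_character \<sigma> A \<omega> \<and> (\<forall>a\<in>A. \<omega> (l1_star \<sigma> a) = cnj (\<omega> a))"

definition l1_continuous_on :: "'a l1elem set \<Rightarrow> ('a l1elem \<Rightarrow> complex) \<Rightarrow> bool" where
  "l1_continuous_on A \<omega> \<longleftrightarrow>
     (\<forall>a\<in>A. \<forall>e>0. \<exists>d>0. \<forall>b\<in>A. l1_norm (l1_diff b a) < d \<longrightarrow> cmod (\<omega> b - \<omega> a) < e)"

definition omega_x :: "'a \<Rightarrow> 'a l1elem \<Rightarrow> complex" where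
  "omega_x x a = a 0 x"

definition min_period :: "('a::topological_space \<Rightarrow> 'a) \<Rightarrow> 'a \<Rightarrow> int" where
  "min_period \<sigma> x = (LEAST n. n \<ge> 1 \<and> x \<in> interior (Fix \<sigma> n))"

definition omega_xc :: "('a::topological_space \<Rightarrow> 'a) \<Rightarrow> 'a \<Rightarrow> complex \<Rightarrow> 'a l1elem \<Rightarrow> complex" where
  "omega_xc \<sigma> x c a =
     (\<Sum>j\<in>{j. j * min_period \<sigma> x \<in> coeff_support a}. a (j * min_period \<sigma> x) x * c powi j)"

end

theory Submission
  imports Defs
begin

text \<open>A coefficient \<open>f\<^sub>k\<close> of an element of the commutant is supported in \<open>Fix\<^sub>k(\<sigma>)\<close>,
  so every point where it does not vanish lies in the interior of \<open>Fix\<^sub>k(\<sigma>)\<close>.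
  Off the periodic interior only \<open>f\<^sub>0\<close> survives at \<open>x\<close>, so \<open>\<omega>\<^sub>x\<close> is evaluation of the
  constant coefficient: multiplicative, hermitian and dominated by the \<open>l\<^sup>1\<close>-norm.
  At a point \<open>x\<close> of the periodic interior with minimal period \<open>n\<close>, only the coefficients of
  degree \<open>jn\<close> survive at \<open>x\<close>, and \<open>\<sigma>\<^bsup>jn\<^esup>\<close> fixes \<open>x\<close>; the twisted convolution thus becomes
  an ordinary convolution of Laurent coefficients, and \<open>\<omega>\<^bsub>x,c\<^esub>\<close> is a character.
  The involution turns \<open>\<omega>\<^bsub>x,c\<^esub>\<close> into the conjugate of \<open>\<omega>\<^bsub>x,1/cnj c\<^esub>\<close>, so \<open>\<omega>\<^bsub>x,c\<^esub>\<close> is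
  hermitian iff \<open>|c| = 1\<close>. For \<open>|c| = 1\<close> it is dominated by the \<open>l\<^sup>1\<close>-norm, whereas for
  \<open>|c| \<noteq> 1\<close> the elements \<open>g\<delta>\<^bsup>jn\<^esup>\<close>, with \<open>g\<close> an Urysohn bump at \<open>x\<close> supported in
  \<open>Fix\<^sub>n(\<sigma>)\<close>, have bounded norm while their values \<open>c\<^sup>j\<close> are unbounded.\<close>

section \<open>Integer powers of a bijection and their fixed points\<close>

lemma sigma_pow_0 [simp]: "sigma_pow \<sigma> 0 = id"
  by (simp add: sigma_pow_def)

lemma sigma_pow_plus_1:
  assumes "bij \<sigma>"
  shows "sigma_pow \<sigma> (k + 1) = \<sigma> \<circ> sigma_pow \<sigma> k"
proof -
  have \<sigma>_inv: "\<sigma> \<circ> inv \<sigma> = id"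
    using assms by (simp add: fun_eq_iff bij_is_surj surj_f_inv_f)
  consider "k \<ge> 0" | "k = -1" | "k < -1" by linarith
  then show ?thesis
  proof cases
    case 1
    then have "nat (k + 1) = Suc (nat k)" by simp
    with 1 show ?thesis by (simp add: sigma_pow_def)
  next
    case 2
    with \<sigma>_inv show ?thesis by (simp add: sigma_pow_def)
  next
    case 3
    then have "nat (- k) = Suc (nat (- (k + 1)))" by simp
    with 3 have "sigma_pow \<sigma> k = inv \<sigma> \<circ> sigma_pow \<sigma> (k + 1)"
      by (simp add: sigma_pow_def)
    with \<sigma>_inv show ?thesis by (simp add: comp_assoc[symmetric])
  qed
qed

lemma sigma_pow_minus_1:
  assumes "bij \<sigma>"
  shows "sigma_pow \<sigma> (k - 1) = inv \<sigma> \<circ> sigma_pow \<sigma> k"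
proof -
  have "inv \<sigma> \<circ> \<sigma> = id"
    using assms by (simp add: fun_eq_iff bij_is_inj)
  moreover have "sigma_pow \<sigma> k = \<sigma> \<circ> sigma_pow \<sigma> (k - 1)"
    using sigma_pow_plus_1[OF assms, of "k - 1"] by simp
  ultimately show ?thesis by (simp add: comp_assoc[symmetric])
qed

lemma sigma_pow_add:
  assumes "bij \<sigma>"
  shows "sigma_pow \<sigma> (a + b) = sigma_pow \<sigma> a \<circ> sigma_pow \<sigma> b"
proof (induction a rule: int_induct[where k = 0])
  case base
  show ?case by simp
next
  case (step1 i)
  have "sigma_pow \<sigma> (i + 1 + b) = \<sigma> \<circ> sigma_pow \<sigma> (i + b)"
    using sigma_pow_plus_1[OF assms, of "i + b"] by (simp add: ac_simps)
  with step1 show ?case by (simp add: sigma_pow_plus_1[OF assms, of i] comp_assoc)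
next
  case (step2 i)
  have "sigma_pow \<sigma> (i - 1 + b) = inv \<sigma> \<circ> sigma_pow \<sigma> (i + b)"
    using sigma_pow_minus_1[OF assms, of "i + b"] by (simp add: algebra_simps)
  with step2 show ?case by (simp add: sigma_pow_minus_1[OF assms, of i] comp_assoc)
qed

lemma Fix_0 [simp]: "Fix \<sigma> 0 = UNIV"
  by (simp add: Fix_def)

lemma Fix_add: "bij \<sigma> \<Longrightarrow> x \<in> Fix \<sigma> a \<Longrightarrow> x \<in> Fix \<sigma> b \<Longrightarrow> x \<in> Fix \<sigma> (a + b)"
  by (simp add: Fix_def sigma_pow_add)

lemma Fix_uminus:
  assumes "bij \<sigma>"
  shows "Fix \<sigma> (- a) = Fix \<sigma> a"
proof -
  have "x \<in> Fix \<sigma> (- k)" if "x \<in> Fix \<sigma> k" for x k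
  proof -
    have "sigma_pow \<sigma> (- k) x = sigma_pow \<sigma> (- k) (sigma_pow \<sigma> k x)"
      using that by (simp add: Fix_def)
    also have "\<dots> = sigma_pow \<sigma> (- k + k) x"
      by (simp only: sigma_pow_add[OF assms] comp_apply)
    also have "\<dots> = x" by simp
    finally show ?thesis by (simp add: Fix_def)
  qed
  from this[of _ a] this[of _ "- a"] show ?thesis by auto
qed

lemma Fix_mult: "bij \<sigma> \<Longrightarrow> x \<in> Fix \<sigma> a \<Longrightarrow> x \<in> Fix \<sigma> (j * a)"
proof (induction j rule: int_induct[where k = 0])
  case base
  show ?case by simp
next
  case (step1 i)
  then show ?case using Fix_add[of \<sigma> x "i * a" a] by (simp add: algebra_simps)
next
  case (step2 i)
  then show ?case using Fix_add[of \<sigma> x "i * a" "- a"] Fix_uminus[of \<sigma> a]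
    by (simp add: algebra_simps)
qed

lemma Fix_mod:
  assumes "bij \<sigma>" "x \<in> Fix \<sigma> k" "x \<in> Fix \<sigma> n"
  shows "x \<in> Fix \<sigma> (k mod n)"
proof -
  have "x \<in> Fix \<sigma> (k + (- (k div n)) * n)"
    using assms by (intro Fix_add Fix_mult)
  moreover have "k + (- (k div n)) * n = k mod n"
    by (simp add: minus_div_mult_eq_mod[symmetric])
  ultimately show ?thesis by simp
qed

lemma min_period:
  assumes "x \<in> FixInt \<sigma>"
  shows "min_period \<sigma> x \<ge> 1" "x \<in> interior (Fix \<sigma> (min_period \<sigma> x))"
    and "\<And>m. m \<ge> 1 \<Longrightarrow> x \<in> interior (Fix \<sigma> m) \<Longrightarrow> min_period \<sigma> x \<le> m"
proof -
  define P where "P m \<longleftrightarrow> m \<ge> 1 \<and> x \<in> interior (Fix \<sigma> m)" for m :: int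
  obtain q where "P q"
    using assms by (auto simp: FixInt_def P_def)
  then have "\<exists>k::nat. P (int k)"
    by (intro exI[of _ "nat q"]) (simp add: P_def)
  define n where "n = (LEAST k::nat. P (int k))"
  have Pn: "P (int n)"
    unfolding n_def using \<open>\<exists>k. P (int k)\<close> by (rule LeastI_ex)
  have least: "int n \<le> m" if "P m" for m
  proof -
    from that have "m \<ge> 1" "P (int (nat m))" by (simp_all add: P_def)
    moreover from \<open>P (int (nat m))\<close> have "n \<le> nat m"
      unfolding n_def by (rule Least_le)
    ultimately show ?thesis by linarith
  qed
  have "(LEAST m. P m) = int n"
    using Pn least by (rule Least_equality)
  then have "min_period \<sigma> x = int n"
    by (simp add: min_period_def P_def)
  with Pn least show "min_period \<sigma> x \<ge> 1" "x \<in> interior (Fix \<sigma> (min_period \<sigma> x))"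
    and "\<And>m. m \<ge> 1 \<Longrightarrow> x \<in> interior (Fix \<sigma> m) \<Longrightarrow> min_period \<sigma> x \<le> m"
    unfolding P_def by auto
qed

lemma Fix_mult_min_period:
  assumes "bij \<sigma>" "x \<in> FixInt \<sigma>"
  shows "x \<in> Fix \<sigma> (j * min_period \<sigma> x)"
proof (rule Fix_mult[OF assms(1)])
  show "x \<in> Fix \<sigma> (min_period \<sigma> x)"
    using min_period(2)[OF assms(2)] interior_subset by blast
qed

lemma min_period_dvd:
  assumes "bij \<sigma>" "x \<in> FixInt \<sigma>" "x \<in> interior (Fix \<sigma> k)"
  shows "min_period \<sigma> x dvd k"
proof (rule ccontr)
  define n where "n = min_period \<sigma> x"
  assume "\<not> n dvd k"
  then have "k mod n \<noteq> 0"
    by (simp add: dvd_eq_mod_eq_0)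
  moreover have "n \<ge> 1"
    using min_period(1)[OF assms(2)] by (simp add: n_def)
  then have "0 \<le> k mod n" and mod_less: "k mod n < n"
    by simp_all
  ultimately have mod_pos: "1 \<le> k mod n" by linarith
  have "x \<in> interior (Fix \<sigma> k \<inter> Fix \<sigma> n)"
    using assms(3) min_period(2)[OF assms(2)] by (simp add: n_def)
  also have "\<dots> \<subseteq> interior (Fix \<sigma> (k mod n))"
    using Fix_mod[OF assms(1)] by (intro interior_mono) blast
  finally have "n \<le> k mod n"
    using min_period(3)[OF assms(2) mod_pos] by (simp add: n_def)
  with mod_less show False by simp
qed

section \<open>The commutant and the \<open>l\<^sup>1\<close>-norm\<close>

lemma not_in_coeff_support: "k \<notin> coeff_support l \<Longrightarrow> l k y = 0"
  by (simp add: coeff_support_def)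

lemma coeff_nonzero_imp_interior_Fix:
  assumes "l \<in> C00' \<sigma>" "l k y \<noteq> 0"
  shows "y \<in> interior (Fix \<sigma> k)"
proof -
  have cont: "continuous_on UNIV (l k)" and supp: "supp (l k) \<subseteq> Fix \<sigma> k"
    using assms(1) by (auto simp: C00'_def c00_def)
  have "open (l k -` (- {0}))"
    using cont by (simp add: continuous_on_open_vimage open_Compl)
  moreover have "l k -` (- {0}) \<subseteq> Fix \<sigma> k"
    using closure_subset[of "{y. l k y \<noteq> 0}"] supp by (auto simp: supp_def)
  ultimately show ?thesis
    using assms(2) interior_maximal by blast
qed

lemma coeff_vanishes_off_FixInt:
  assumes "bij \<sigma>" "x \<notin> FixInt \<sigma>" "l \<in> C00' \<sigma>" "k \<noteq> 0"
  shows "l k x = 0"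
proof (rule ccontr)
  assume "l k x \<noteq> 0"
  then have "x \<in> interior (Fix \<sigma> k)" "x \<in> interior (Fix \<sigma> (- k))"
    using coeff_nonzero_imp_interior_Fix[OF assms(3)] Fix_uminus[OF assms(1)] by auto
  moreover have "k \<ge> 1 \<or> - k \<ge> 1" using assms(4) by linarith
  ultimately show False using assms(2) by (auto simp: FixInt_def)
qed

lemma coeff_vanishes_off_multiples_of_min_period:
  assumes "bij \<sigma>" "x \<in> FixInt \<sigma>" "l \<in> C00' \<sigma>" "\<not> min_period \<sigma> x dvd k"
  shows "l k x = 0"
  using assms coeff_nonzero_imp_interior_Fix min_period_dvd by blast

lemma l1_diff_in_c00:
  assumes "a \<in> c00" "b \<in> c00"
  shows "l1_diff b a \<in> c00"
proof -
  have "coeff_support (l1_diff b a) \<subseteq> coeff_support a \<union> coeff_support b"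
    by (auto simp: coeff_support_def l1_diff_def fun_eq_iff)
  then have "finite (coeff_support (l1_diff b a))"
    using assms by (auto simp: c00_def intro: finite_subset)
  moreover have "continuous_on UNIV (l1_diff b a k)" for k
    using assms unfolding l1_diff_def c00_def by (auto intro!: continuous_intros)
  ultimately show ?thesis by (simp add: c00_def)
qed

definition l1_monomial :: "int \<Rightarrow> ('a \<Rightarrow> complex) \<Rightarrow> 'a l1elem" where
  "l1_monomial k f = (\<lambda>m. if m = k then f else (\<lambda>_. 0))"

lemma coeff_support_l1_monomial: "coeff_support (l1_monomial k f) \<subseteq> {k}"
  by (auto simp: coeff_support_def l1_monomial_def)

lemma l1_monomial_in_C00':
  assumes "continuous_on UNIV f" "supp f \<subseteq> Fix \<sigma> k"
  shows "l1_monomial k f \<in> C00' \<sigma>"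
proof -
  have "finite (coeff_support (l1_monomial k f))"
    using coeff_support_l1_monomial finite_subset by fastforce
  moreover have "continuous_on UNIV (l1_monomial k f m)" "supp (l1_monomial k f m) \<subseteq> Fix \<sigma> m" for m
    using assms by (auto simp: l1_monomial_def supp_def)
  ultimately show ?thesis by (simp add: C00'_def c00_def)
qed

lemma zero_in_C00': "(\<lambda>_ _. 0) \<in> C00' \<sigma>"
  by (auto simp: C00'_def c00_def coeff_support_def supp_def)

lemma norm_le_sup_norm:
  fixes f :: "'a::topological_space \<Rightarrow> complex"
  assumes "compact (UNIV :: 'a set)" "continuous_on UNIV f"
  shows "cmod (f y) \<le> sup_norm f"
proof -
  have "compact (range (\<lambda>y. cmod (f y)))"
    by (rule compact_continuous_image) (use assms in \<open>auto intro!: continuous_intros\<close>)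
  then have "bdd_above (range (\<lambda>y. cmod (f y)))"
    by (simp add: bounded_imp_bdd_above compact_imp_bounded)
  then show ?thesis unfolding sup_norm_def by (rule cSUP_upper[OF UNIV_I])
qed

lemma sup_norm_nonneg:
  fixes f :: "'a::topological_space \<Rightarrow> complex"
  assumes "compact (UNIV :: 'a set)" "continuous_on UNIV f"
  shows "0 \<le> sup_norm f"
  using norm_le_sup_norm[OF assms] norm_ge_zero order_trans by blast

lemma sup_norm_le: "(\<And>y. cmod (f y) \<le> M) \<Longrightarrow> sup_norm f \<le> M"
  unfolding sup_norm_def by (rule cSUP_least) auto

lemma l1_norm_l1_monomial: "l1_norm (l1_monomial k f) = sup_norm f"
proof (cases "f = (\<lambda>_. 0)")
  case True
  then show ?thesis by (simp add: l1_norm_def sup_norm_def coeff_support_def l1_monomial_def)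
next
  case False
  then have "coeff_support (l1_monomial k f) = {k}"
    by (auto simp: coeff_support_def l1_monomial_def)
  then show ?thesis by (simp add: l1_norm_def l1_monomial_def)
qed

lemma norm_coeff_le_l1_norm:
  assumes "compact (UNIV :: 'a::topological_space set)" "l \<in> c00"
  shows "cmod ((l :: 'a l1elem) k y) \<le> l1_norm l"
proof (cases "k \<in> coeff_support l")
  case True
  have "cmod (l k y) \<le> sup_norm (l k)"
    using assms by (intro norm_le_sup_norm) (auto simp: c00_def)
  also have "\<dots> \<le> l1_norm l"
    unfolding l1_norm_def using assms True
    by (intro member_le_sum sup_norm_nonneg) (auto simp: c00_def)
  finally show ?thesis .
next
  case False
  then show ?thesis
    using assms by (auto simp: not_in_coeff_support l1_norm_def c00_def
        intro!: sum_nonneg sup_norm_nonneg)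
qed

lemma l1_continuous_on_if_norm_bounded:
  assumes "A \<subseteq> c00"
    and "\<And>a b. a \<in> A \<Longrightarrow> b \<in> A \<Longrightarrow> \<omega> b - \<omega> a = \<omega> (l1_diff b a)"
    and "\<And>l. l \<in> c00 \<Longrightarrow> cmod (\<omega> l) \<le> l1_norm l"
  shows "l1_continuous_on A \<omega>"
  unfolding l1_continuous_on_def
proof (intro ballI allI impI exI conjI)
  fix a b and e :: real
  assume "a \<in> A" "b \<in> A" "l1_norm (l1_diff b a) < e"
  then show "cmod (\<omega> b - \<omega> a) < e"
    using assms l1_diff_in_c00 by (metis order.strict_trans1 subsetD)
qed

section \<open>The characters \<open>\<omega>\<^sub>x\<close>\<close>

lemma omega_x_l1_mult:
  assumes "bij \<sigma>" "x \<notin> FixInt \<sigma>" "a \<in> C00' \<sigma>"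
  shows "omega_x x (l1_mult \<sigma> a b) = omega_x x a * omega_x x b"
proof -
  have "omega_x x (l1_mult \<sigma> a b) = (\<Sum>k\<in>coeff_support a. a k x * alpha_pow \<sigma> k (b (- k)) x)"
    by (simp add: omega_x_def l1_mult_def)
  also have "\<dots> = (\<Sum>k\<in>coeff_support a. if k = 0 then a 0 x * b 0 x else 0)"
    by (rule sum.cong) (auto simp: coeff_vanishes_off_FixInt[OF assms] alpha_pow_def)
  also have "\<dots> = a 0 x * b 0 x"
    using assms(3) by (auto simp: not_in_coeff_support C00'_def c00_def)
  finally show ?thesis by (simp add: omega_x_def)
qed

lemma hermitian_character_omega_x:
  assumes "bij \<sigma>" "x \<notin> FixInt \<sigma>"
  shows "is_hermitian_character \<sigma> (C00' \<sigma>) (omega_x x)"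
proof -
  have "l1_monomial 0 (\<lambda>_. 1) \<in> C00' \<sigma>"
    by (rule l1_monomial_in_C00') auto
  moreover have "omega_x x (l1_monomial 0 (\<lambda>_. 1)) = 1"
    by (simp add: omega_x_def l1_monomial_def)
  ultimately show ?thesis
    using omega_x_l1_mult[OF assms]
    by (auto simp: is_hermitian_character_def is_character_def omega_x_def
        l1_add_def l1_scale_def l1_star_def alpha_pow_def
        intro!: bexI[of _ "l1_monomial 0 (\<lambda>_. 1)"])
qed

lemma l1_continuous_omega_x:
  assumes "compact (UNIV :: 'a::topological_space set)"
  shows "l1_continuous_on (C00' \<sigma>) (omega_x (x :: 'a))"
  using norm_coeff_le_l1_norm[OF assms]
  by (intro l1_continuous_on_if_norm_bounded) (auto simp: C00'_def omega_x_def l1_diff_def)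

section \<open>The characters \<open>\<omega>\<^bsub>x,c\<^esub>\<close>\<close>

lemma finite_multiple_indices:
  assumes "finite S" "n \<noteq> (0::int)"
  shows "finite {j. j * n \<in> S}"
proof -
  have "inj (\<lambda>j. j * n)"
    using assms(2) by (auto simp: inj_def)
  then have "finite ((\<lambda>j. j * n) -` S)"
    using assms(1) by (rule finite_vimageI[rotated])
  then show ?thesis by (simp add: vimage_def)
qed

lemma sum_powi_convolution:
  fixes s t :: "int \<Rightarrow> 'a::field"
  assumes "c \<noteq> 0" "finite I" "finite J" "finite K"
    and "\<And>j. j \<notin> J \<Longrightarrow> t j = 0" "\<And>i j. i \<in> I \<Longrightarrow> j \<in> J \<Longrightarrow> i + j \<in> K"
  shows "(\<Sum>k\<in>K. (\<Sum>i\<in>I. s i * t (k - i)) * c powi k)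
    = (\<Sum>i\<in>I. s i * c powi i) * (\<Sum>j\<in>J. t j * c powi j)"
proof -
  have shift: "(\<Sum>k\<in>K. t (k - i) * c powi k) = c powi i * (\<Sum>j\<in>J. t j * c powi j)"
    if "i \<in> I" for i
  proof -
    have "(\<Sum>k\<in>K. t (k - i) * c powi k) = (\<Sum>k\<in>(\<lambda>j. i + j) ` J. t (k - i) * c powi k)"
    proof (rule sum.mono_neutral_right)
      show "(\<lambda>j. i + j) ` J \<subseteq> K"
        using assms(6) that by auto
      show "\<forall>k\<in>K - (\<lambda>j. i + j) ` J. t (k - i) * c powi k = 0"
      proof
        fix k
        assume "k \<in> K - (\<lambda>j. i + j) ` J"
        then have "k - i \<notin> J" by force
        then show "t (k - i) * c powi k = 0" using assms(5) by simp
      qed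
    qed (fact assms(4))
    also have "\<dots> = (\<Sum>j\<in>J. t j * c powi (i + j))"
      by (subst sum.reindex) (auto simp: inj_on_def)
    also have "\<dots> = c powi i * (\<Sum>j\<in>J. t j * c powi j)"
      using assms(1) by (simp add: power_int_add sum_distrib_left mult_ac)
    finally show ?thesis .
  qed
  have "(\<Sum>k\<in>K. (\<Sum>i\<in>I. s i * t (k - i)) * c powi k) = (\<Sum>k\<in>K. \<Sum>i\<in>I. s i * (t (k - i) * c powi k))"
    by (simp add: sum_distrib_right mult.assoc)
  also have "\<dots> = (\<Sum>i\<in>I. s i * (\<Sum>k\<in>K. t (k - i) * c powi k))"
    by (subst sum.swap) (simp add: sum_distrib_left)
  also have "\<dots> = (\<Sum>i\<in>I. s i * c powi i) * (\<Sum>j\<in>J. t j * c powi j)"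
    using shift by (simp add: sum_distrib_right mult.assoc)
  finally show ?thesis .
qed

lemma omega_xc_eq_sum:
  assumes "n = min_period \<sigma> x" "finite J" "{j. j * n \<in> coeff_support a} \<subseteq> J"
  shows "omega_xc \<sigma> x c a = (\<Sum>j\<in>J. a (j * n) x * c powi j)"
  unfolding omega_xc_def assms(1)[symmetric]
  by (rule sum.mono_neutral_left[OF assms(2,3)]) (auto simp: not_in_coeff_support)

lemma omega_xc_lincomb:
  assumes "x \<in> FixInt \<sigma>" "finite (coeff_support a)" "finite (coeff_support b)"
  shows "omega_xc \<sigma> x c (\<lambda>k y. p * a k y + q * b k y)
    = p * omega_xc \<sigma> x c a + q * omega_xc \<sigma> x c b"
proof -
  define n where "n = min_period \<sigma> x"
  have "n \<noteq> 0"
    using min_period(1)[OF assms(1)] by (simp add: n_def)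
  define J where "J = {j. j * n \<in> coeff_support a} \<union> {j. j * n \<in> coeff_support b}"
  have J: "finite J"
    using finite_multiple_indices assms(2,3) \<open>n \<noteq> 0\<close> by (simp add: J_def)
  have "omega_xc \<sigma> x c (\<lambda>k y. p * a k y + q * b k y)
      = (\<Sum>j\<in>J. (p * a (j * n) x + q * b (j * n) x) * c powi j)"
    by (rule omega_xc_eq_sum[OF n_def J]) (auto simp: J_def coeff_support_def fun_eq_iff)
  also have "\<dots> = p * (\<Sum>j\<in>J. a (j * n) x * c powi j) + q * (\<Sum>j\<in>J. b (j * n) x * c powi j)"
    by (simp add: sum.distrib sum_distrib_left algebra_simps)
  also have "(\<Sum>j\<in>J. a (j * n) x * c powi j) = omega_xc \<sigma> x c a"
    by (rule omega_xc_eq_sum[OF n_def J, symmetric]) (auto simp: J_def)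
  also have "(\<Sum>j\<in>J. b (j * n) x * c powi j) = omega_xc \<sigma> x c b"
    by (rule omega_xc_eq_sum[OF n_def J, symmetric]) (auto simp: J_def)
  finally show ?thesis .
qed

lemma omega_xc_l1_add:
  "x \<in> FixInt \<sigma> \<Longrightarrow> finite (coeff_support a) \<Longrightarrow> finite (coeff_support b) \<Longrightarrow>
    omega_xc \<sigma> x c (l1_add a b) = omega_xc \<sigma> x c a + omega_xc \<sigma> x c b"
  using omega_xc_lincomb[where p = 1 and q = 1] by (simp add: l1_add_def)

lemma omega_xc_l1_diff:
  "x \<in> FixInt \<sigma> \<Longrightarrow> finite (coeff_support a) \<Longrightarrow> finite (coeff_support b) \<Longrightarrow>
    omega_xc \<sigma> x c (l1_diff b a) = omega_xc \<sigma> x c b - omega_xc \<sigma> x c a"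
  using omega_xc_lincomb[where p = 1 and q = "- 1" and a = b and b = a] by (simp add: l1_diff_def)

lemma omega_xc_l1_scale:
  "x \<in> FixInt \<sigma> \<Longrightarrow> finite (coeff_support a) \<Longrightarrow>
    omega_xc \<sigma> x c (l1_scale d a) = d * omega_xc \<sigma> x c a"
  using omega_xc_lincomb[where p = d and q = 0 and b = a] by (simp add: l1_scale_def)

lemma omega_xc_l1_monomial:
  assumes "x \<in> FixInt \<sigma>"
  shows "omega_xc \<sigma> x c (l1_monomial (j * min_period \<sigma> x) f) = f x * c powi j"
proof -
  define n where "n = min_period \<sigma> x"
  have "n \<noteq> 0"
    using min_period(1)[OF assms] by (simp add: n_def)
  then have "{i. i * n \<in> coeff_support (l1_monomial (j * n) f)} \<subseteq> {j}"
    using coeff_support_l1_monomial by fastforce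
  from omega_xc_eq_sum[OF n_def _ this] show ?thesis
    by (simp add: n_def l1_monomial_def)
qed

lemma l1_mult_coeff_at_multiple:
  assumes "bij \<sigma>" "x \<in> FixInt \<sigma>" "a \<in> C00' \<sigma>"
  defines "n \<equiv> min_period \<sigma> x"
  shows "l1_mult \<sigma> a b (j * n) x
    = (\<Sum>i\<in>{i. i * n \<in> coeff_support a}. a (i * n) x * b ((j - i) * n) x)"
proof -
  define I where "I = {i. i * n \<in> coeff_support a}"
  have "n \<noteq> 0"
    using min_period(1)[OF assms(2)] by (simp add: n_def)
  have "sigma_pow \<sigma> (- k) x = x" if "a k x \<noteq> 0" for k
    using coeff_nonzero_imp_interior_Fix[OF assms(3) that] interior_subset Fix_uminus[OF assms(1)]
    by (force simp: Fix_def)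
  then have fixed: "a k x * alpha_pow \<sigma> k g x = a k x * g x" for k g
    by (cases "a k x = 0") (simp_all add: alpha_pow_def)
  have "l1_mult \<sigma> a b (j * n) x = (\<Sum>k\<in>coeff_support a. a k x * b (j * n - k) x)"
    by (simp only: l1_mult_def fixed)
  also have "\<dots> = (\<Sum>k\<in>(\<lambda>i. i * n) ` I. a k x * b (j * n - k) x)"
  proof (rule sum.mono_neutral_right)
    show "finite (coeff_support a)" "(\<lambda>i. i * n) ` I \<subseteq> coeff_support a"
      using assms(3) by (auto simp: I_def C00'_def c00_def)
    show "\<forall>k\<in>coeff_support a - (\<lambda>i. i * n) ` I. a k x * b (j * n - k) x = 0"
    proof
      fix k
      assume "k \<in> coeff_support a - (\<lambda>i. i * n) ` I"
      then have "\<not> n dvd k"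
        by (auto simp: I_def mult.commute elim!: dvdE)
      then show "a k x * b (j * n - k) x = 0"
        using coeff_vanishes_off_multiples_of_min_period[OF assms(1-3)] by (simp add: n_def)
    qed
  qed
  also have "\<dots> = (\<Sum>i\<in>I. a (i * n) x * b ((j - i) * n) x)"
    using \<open>n \<noteq> 0\<close> by (subst sum.reindex) (auto simp: inj_on_def left_diff_distrib)
  finally show ?thesis by (simp add: I_def)
qed

lemma coeff_support_l1_mult:
  "coeff_support (l1_mult \<sigma> a b) \<subseteq> {p + q |p q. p \<in> coeff_support a \<and> q \<in> coeff_support b}"
proof
  fix m
  assume "m \<in> coeff_support (l1_mult \<sigma> a b)"
  then obtain y where "(\<Sum>k\<in>coeff_support a. a k y * alpha_pow \<sigma> k (b (m - k)) y) \<noteq> 0"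
    by (auto simp: coeff_support_def l1_mult_def fun_eq_iff)
  then obtain k where k: "k \<in> coeff_support a" and "alpha_pow \<sigma> k (b (m - k)) y \<noteq> 0"
    by (rule sum.not_neutral_contains_not_neutral) simp
  then have "m - k \<in> coeff_support b"
    by (auto simp: coeff_support_def alpha_pow_def)
  with k show "m \<in> {p + q |p q. p \<in> coeff_support a \<and> q \<in> coeff_support b}"
    by force
qed

lemma omega_xc_l1_mult:
  assumes "bij \<sigma>" "x \<in> FixInt \<sigma>" "c \<noteq> 0" "a \<in> C00' \<sigma>" "b \<in> C00' \<sigma>"
  shows "omega_xc \<sigma> x c (l1_mult \<sigma> a b) = omega_xc \<sigma> x c a * omega_xc \<sigma> x c b"
proof -
  define n where "n = min_period \<sigma> x"
  have "n \<noteq> 0"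
    using min_period(1)[OF assms(2)] by (simp add: n_def)
  have fin: "finite (coeff_support a)" "finite (coeff_support b)"
    using assms(4,5) by (simp_all add: C00'_def c00_def)
  then have "finite (coeff_support (l1_mult \<sigma> a b))"
    by (intro finite_subset[OF coeff_support_l1_mult]) (simp add: finite_image_set2)
  define I where "I = {i. i * n \<in> coeff_support a}"
  define J where "J = {j. j * n \<in> coeff_support b}"
  define K where "K = {k. k * n \<in> coeff_support (l1_mult \<sigma> a b)} \<union> {i + j |i j. i \<in> I \<and> j \<in> J}"
  have "finite I" "finite J"
    using fin \<open>n \<noteq> 0\<close> by (simp_all add: I_def J_def finite_multiple_indices)
  moreover from this have "finite K"
    using \<open>finite (coeff_support (l1_mult \<sigma> a b))\<close> \<open>n \<noteq> 0\<close>
    by (simp add: K_def finite_multiple_indices finite_image_set2)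
  ultimately have "omega_xc \<sigma> x c (l1_mult \<sigma> a b)
      = (\<Sum>k\<in>K. (\<Sum>i\<in>I. a (i * n) x * b ((k - i) * n) x) * c powi k)"
    using omega_xc_eq_sum[OF n_def, of K] l1_mult_coeff_at_multiple[OF assms(1,2,4)]
    by (simp add: K_def I_def n_def)
  also have "\<dots> = (\<Sum>i\<in>I. a (i * n) x * c powi i) * (\<Sum>j\<in>J. b (j * n) x * c powi j)"
  proof (rule sum_powi_convolution[where t = "\<lambda>j. b (j * n) x"])
    show "b (j * n) x = 0" if "j \<notin> J" for j
      using that by (simp add: J_def not_in_coeff_support)
    show "i + j \<in> K" if "i \<in> I" "j \<in> J" for i j
      using that by (auto simp: K_def)
  qed fact+
  also have "\<dots> = omega_xc \<sigma> x c a * omega_xc \<sigma> x c b"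
    by (simp add: omega_xc_def n_def I_def J_def)
  finally show ?thesis .
qed

lemma omega_xc_l1_star:
  assumes "bij \<sigma>" "x \<in> FixInt \<sigma>" "finite (coeff_support a)"
  shows "omega_xc \<sigma> x c (l1_star \<sigma> a) = cnj (omega_xc \<sigma> x (inverse (cnj c)) a)"
proof -
  define n where "n = min_period \<sigma> x"
  define I where "I = {i. i * n \<in> coeff_support a}"
  have "finite I"
    using min_period(1)[OF assms(2)] assms(3) by (simp add: I_def n_def finite_multiple_indices)
  have "{j. j * n \<in> coeff_support (l1_star \<sigma> a)} \<subseteq> uminus ` I"
  proof
    fix j
    assume "j \<in> {j. j * n \<in> coeff_support (l1_star \<sigma> a)}"
    then have "- j \<in> I"
      by (auto simp: I_def coeff_support_def l1_star_def alpha_pow_def fun_eq_iff)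
    then show "j \<in> uminus ` I" by force
  qed
  with \<open>finite I\<close> have "omega_xc \<sigma> x c (l1_star \<sigma> a)
      = (\<Sum>j\<in>uminus ` I. l1_star \<sigma> a (j * n) x * c powi j)"
    by (intro omega_xc_eq_sum[OF n_def]) simp_all
  also have "\<dots> = (\<Sum>i\<in>I. l1_star \<sigma> a (- i * n) x * c powi (- i))"
    by (simp add: sum.reindex)
  also have "\<dots> = (\<Sum>i\<in>I. cnj (a (i * n) x * inverse (cnj c) powi i))"
    using Fix_mult_min_period[OF assms(1,2)]
    by (simp add: l1_star_def alpha_pow_def Fix_def n_def power_int_minus power_int_inverse)
  also have "\<dots> = cnj (omega_xc \<sigma> x (inverse (cnj c)) a)"
    by (simp add: omega_xc_def I_def n_def)
  finally show ?thesis .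
qed

lemma norm_omega_xc_le_l1_norm:
  assumes "compact (UNIV :: 'a::topological_space set)" "x \<in> FixInt \<sigma>" "cmod c = 1" "l \<in> c00"
  shows "cmod (omega_xc \<sigma> x c (l :: 'a l1elem)) \<le> l1_norm l"
proof -
  define n where "n = min_period \<sigma> x"
  define I where "I = {i. i * n \<in> coeff_support l}"
  have fin: "finite (coeff_support l)" and cont: "\<And>k. continuous_on UNIV (l k)"
    using assms(4) by (auto simp: c00_def)
  have "n \<ge> 1"
    using min_period(1)[OF assms(2)] by (simp add: n_def)
  have "cmod (omega_xc \<sigma> x c l) \<le> (\<Sum>i\<in>I. cmod (l (i * n) x * c powi i))"
    unfolding omega_xc_def n_def[symmetric] I_def[symmetric] by (rule norm_sum)
  also have "\<dots> \<le> (\<Sum>i\<in>I. sup_norm (l (i * n)))"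
    using assms(3)
    by (intro sum_mono) (simp add: norm_mult norm_power_int norm_le_sup_norm[OF assms(1) cont])
  also have "\<dots> = (\<Sum>k\<in>(\<lambda>i. i * n) ` I. sup_norm (l k))"
    using \<open>n \<ge> 1\<close> by (subst sum.reindex) (auto simp: inj_on_def)
  also have "\<dots> \<le> l1_norm l"
    unfolding l1_norm_def using fin
    by (intro sum_mono2) (auto simp: I_def intro: sup_norm_nonneg[OF assms(1) cont])
  finally show ?thesis .
qed

lemma character_omega_xc:
  assumes "bij \<sigma>" "x \<in> FixInt \<sigma>" "c \<noteq> 0"
  shows "is_character \<sigma> (C00' \<sigma>) (omega_xc \<sigma> x c)"
proof -
  have fin: "finite (coeff_support a)" if "a \<in> C00' \<sigma>" for a
    using that by (simp add: C00'_def c00_def)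
  have "l1_monomial 0 (\<lambda>_. 1) \<in> C00' \<sigma>"
    by (rule l1_monomial_in_C00') auto
  moreover have "omega_xc \<sigma> x c (l1_monomial 0 (\<lambda>_. 1)) = 1"
    using omega_xc_l1_monomial[OF assms(2), of c 0] by simp
  ultimately show ?thesis
    unfolding is_character_def
    using omega_xc_l1_add[OF assms(2) fin fin] omega_xc_l1_scale[OF assms(2) fin]
      omega_xc_l1_mult[OF assms] by (metis one_neq_zero)
qed

section \<open>Continuity and hermiticity of \<open>\<omega>\<^bsub>x,c\<^esub>\<close>\<close>

lemma Urysohn_bump:
  fixes x :: "'a::t2_space"
  assumes "compact (UNIV :: 'a set)" "open U" "x \<in> U"
  obtains f :: "'a \<Rightarrow> real" where "continuous_on UNIV f" "f x = 1"
    "\<And>y. 0 \<le> f y" "\<And>y. f y \<le> 1" "closure {y. f y \<noteq> 0} \<subseteq> U"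
proof -
  have "normal_space (euclidean :: 'a topology)"
  proof (rule compact_Hausdorff_or_regular_imp_normal_space)
    show "compact_space (euclidean :: 'a topology)"
      using assms(1) by (simp add: compact_space_def)
    show "Hausdorff_space (euclidean :: 'a topology) \<or> regular_space (euclidean :: 'a topology)"
      by (simp add: Hausdorff_space_def separation_t2 disjnt_def)
  qed
  moreover have "closedin euclidean (- U)" "closedin euclidean {x}"
    using assms(2) by (simp_all add: closed_Compl)
  moreover have "disjnt (- U) {x}"
    using assms(3) by (simp add: disjnt_def)
  ultimately obtain g where g: "continuous_map euclidean (top_of_set {0..1}) g"
    "g ` (- U) \<subseteq> {0}" "g ` {x} \<subseteq> {1::real}"
    unfolding normal_space_iff_Urysohn by blast
  have gc: "continuous_on UNIV g" and gr: "\<And>y. g y \<in> {0..1}"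
    using g(1) by (auto simp: continuous_map_in_subtopology)
  \<comment> \<open>cutting \<open>g\<close> off below \<open>1/2\<close> keeps the closure of the support inside \<open>U\<close>\<close>
  define f where "f y = max 0 (2 * g y - 1)" for y
  have "continuous_on UNIV f"
    unfolding f_def by (intro continuous_intros gc)
  moreover have "closure {y. f y \<noteq> 0} \<subseteq> {y. g y \<ge> 1/2}"
    using closed_Collect_le[OF continuous_on_const gc, of "1/2"]
    by (intro closure_minimal) (auto simp: f_def)
  moreover have "{y. g y \<ge> 1/2} \<subseteq> U"
    using g(2) by force
  ultimately show ?thesis
    using that g(3) gr by (force simp: f_def)
qed

lemma exists_bump_at_min_period:
  fixes \<sigma> :: "'a::t2_space \<Rightarrow> 'a"
  assumes "compact (UNIV :: 'a set)" "bij \<sigma>" "x \<in> FixInt \<sigma>"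
  obtains g :: "'a \<Rightarrow> complex" where "g x = 1" "\<And>y. cmod (g y) \<le> 1"
    "\<And>r j. l1_monomial (j * min_period \<sigma> x) (\<lambda>y. r * g y) \<in> C00' \<sigma>"
proof -
  obtain f :: "'a \<Rightarrow> real" where f: "continuous_on UNIV f" "f x = 1" "\<And>y. 0 \<le> f y" "\<And>y. f y \<le> 1"
    and supp_f: "closure {y. f y \<noteq> 0} \<subseteq> interior (Fix \<sigma> (min_period \<sigma> x))"
    using Urysohn_bump[OF assms(1) open_interior min_period(2)[OF assms(3)]] by blast
  have "l1_monomial (j * min_period \<sigma> x) (\<lambda>y. r * complex_of_real (f y)) \<in> C00' \<sigma>" for r j
  proof (rule l1_monomial_in_C00')
    show "continuous_on UNIV (\<lambda>y. r * complex_of_real (f y))"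
      by (intro continuous_intros f(1))
    have "supp (\<lambda>y. r * complex_of_real (f y)) \<subseteq> closure {y. f y \<noteq> 0}"
      unfolding supp_def by (intro closure_mono) auto
    also have "\<dots> \<subseteq> Fix \<sigma> (min_period \<sigma> x)"
      using supp_f interior_subset by blast
    also have "\<dots> \<subseteq> Fix \<sigma> (j * min_period \<sigma> x)"
      using Fix_mult[OF assms(2)] by blast
    finally show "supp (\<lambda>y. r * complex_of_real (f y)) \<subseteq> Fix \<sigma> (j * min_period \<sigma> x)" .
  qed
  moreover have "cmod (complex_of_real (f y)) \<le> 1" for y
    using f(3,4)[of y] by simp
  ultimately show ?thesis
    using that[of "\<lambda>y. complex_of_real (f y)"] f(2) by simp
qed

lemma unimodular_iff_inverse_cnj:
  fixes c :: complex
  assumes "c \<noteq> 0"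
  shows "cmod c = 1 \<longleftrightarrow> inverse (cnj c) = c"
proof -
  have "inverse (cnj c) = c \<longleftrightarrow> c * cnj c = 1"
    using assms by (auto simp: field_simps)
  also have "\<dots> \<longleftrightarrow> (cmod c)\<^sup>2 = 1"
    by (metis complex_norm_square of_real_eq_1_iff)
  also have "\<dots> \<longleftrightarrow> cmod c = 1"
    by (simp add: abs_square_eq_1)
  finally show ?thesis ..
qed

lemma hermitian_character_omega_xc_iff:
  fixes \<sigma> :: "'a::t2_space \<Rightarrow> 'a"
  assumes "compact (UNIV :: 'a set)" "bij \<sigma>" "x \<in> FixInt \<sigma>" "c \<noteq> 0"
  shows "is_hermitian_character \<sigma> (C00' \<sigma>) (omega_xc \<sigma> x c) \<longleftrightarrow> cmod c = 1"
proof -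
  define c' where "c' = inverse (cnj c)"
  have "is_hermitian_character \<sigma> (C00' \<sigma>) (omega_xc \<sigma> x c)
      \<longleftrightarrow> (\<forall>a\<in>C00' \<sigma>. omega_xc \<sigma> x c (l1_star \<sigma> a) = cnj (omega_xc \<sigma> x c a))"
    using character_omega_xc[OF assms(2-4)] by (simp add: is_hermitian_character_def)
  also have "\<dots> \<longleftrightarrow> (\<forall>a\<in>C00' \<sigma>. omega_xc \<sigma> x c' a = omega_xc \<sigma> x c a)"
    by (intro ball_cong refl)
      (simp add: omega_xc_l1_star[OF assms(2,3)] c'_def C00'_def c00_def)
  also have "\<dots> \<longleftrightarrow> c' = c"
  proof
    assume eq: "\<forall>a\<in>C00' \<sigma>. omega_xc \<sigma> x c' a = omega_xc \<sigma> x c a"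
    obtain g where g: "g x = 1" "\<And>y. cmod (g y) \<le> 1"
      "\<And>r j. l1_monomial (j * min_period \<sigma> x) (\<lambda>y. r * g y) \<in> C00' \<sigma>"
      by (rule exists_bump_at_min_period[OF assms(1-3)]) blast
    define m where "m = l1_monomial (1 * min_period \<sigma> x) (\<lambda>y. 1 * g y)"
    have "m \<in> C00' \<sigma>"
      unfolding m_def by (rule g(3))
    with eq have "omega_xc \<sigma> x c' m = omega_xc \<sigma> x c m" ..
    moreover have "omega_xc \<sigma> x d m = d" for d
      unfolding m_def omega_xc_l1_monomial[OF assms(3)] by (simp add: g(1))
    ultimately show "c' = c" by simp
  qed simp
  also have "\<dots> \<longleftrightarrow> cmod c = 1"
    unfolding c'_def using unimodular_iff_inverse_cnj[OF assms(4)] by simp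
  finally show ?thesis .
qed

lemma l1_continuous_on_imp_small_near_0:
  assumes "l1_continuous_on A \<omega>" "(\<lambda>_ _. 0) \<in> A" "\<omega> (\<lambda>_ _. 0) = 0"
  shows "\<exists>d>0. \<forall>b\<in>A. l1_norm b < d \<longrightarrow> cmod (\<omega> b) < 1"
proof -
  have "\<forall>e>0. \<exists>d>0. \<forall>b\<in>A. l1_norm (l1_diff b (\<lambda>_ _. 0)) < d \<longrightarrow> cmod (\<omega> b - \<omega> (\<lambda>_ _. 0)) < e"
    using assms(1,2) unfolding l1_continuous_on_def by blast
  then show ?thesis
    using assms(3) zero_less_one by (simp add: l1_diff_def)
qed

lemma exists_powi_gt:
  fixes r :: real
  assumes "r > 0" "r \<noteq> 1"
  shows "\<exists>j. B < r powi j"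
proof (cases "r > 1")
  case True
  then obtain N where "B < r ^ N"
    using real_arch_pow by blast
  then show ?thesis
    by (metis power_int_of_nat)
next
  case False
  with assms have "1 < inverse r"
    by (simp add: one_less_inverse)
  then obtain N where "B < inverse r ^ N"
    using real_arch_pow by blast
  then have "B < r powi (- int N)"
    by (simp add: power_int_minus power_inverse)
  then show ?thesis ..
qed

lemma unimodular_if_l1_continuous_omega_xc:
  fixes \<sigma> :: "'a::t2_space \<Rightarrow> 'a"
  assumes "compact (UNIV :: 'a set)" "bij \<sigma>" "x \<in> FixInt \<sigma>" "c \<noteq> 0"
    and "l1_continuous_on (C00' \<sigma>) (omega_xc \<sigma> x c)"
  shows "cmod c = 1"
proof (rule ccontr)
  assume "cmod c \<noteq> 1"
  have "omega_xc \<sigma> x c (\<lambda>_ _. 0) = 0"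
    by (simp add: omega_xc_def coeff_support_def)
  with assms(5) have "\<exists>d>0. \<forall>b\<in>C00' \<sigma>. l1_norm b < d \<longrightarrow> cmod (omega_xc \<sigma> x c b) < 1"
    by (rule l1_continuous_on_imp_small_near_0[OF _ zero_in_C00'])
  then obtain d where "d > 0"
    and small: "\<forall>b\<in>C00' \<sigma>. l1_norm b < d \<longrightarrow> cmod (omega_xc \<sigma> x c b) < 1"
    by blast
  obtain g where g: "g x = 1" "\<And>y. cmod (g y) \<le> 1"
    "\<And>r j. l1_monomial (j * min_period \<sigma> x) (\<lambda>y. r * g y) \<in> C00' \<sigma>"
    by (rule exists_bump_at_min_period[OF assms(1-3)]) blast
  from assms(4) \<open>cmod c \<noteq> 1\<close> have "\<exists>j. 2 / d < cmod c powi j"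
    by (simp add: exists_powi_gt)
  then obtain j where j: "2 / d < cmod c powi j" ..
  define b where "b = l1_monomial (j * min_period \<sigma> x) (\<lambda>y. of_real (d / 2) * g y)"
  have "l1_norm b \<le> d / 2"
    unfolding b_def l1_norm_l1_monomial
    using \<open>d > 0\<close> g(2) by (intro sup_norm_le) (simp add: norm_mult mult_left_le)
  with \<open>d > 0\<close> have "l1_norm b < d"
    by simp
  moreover have "b \<in> C00' \<sigma>"
    unfolding b_def by (rule g(3))
  ultimately have "cmod (omega_xc \<sigma> x c b) < 1"
    using small by blast
  moreover have "omega_xc \<sigma> x c b = of_real (d / 2) * c powi j"
    unfolding b_def omega_xc_l1_monomial[OF assms(3)] by (simp add: g(1))
  ultimately have "d / 2 * cmod c powi j < 1"
    using \<open>d > 0\<close> by (simp add: norm_mult norm_power_int)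
  with j \<open>d > 0\<close> show False
    by (simp add: field_simps)
qed

lemma l1_continuous_omega_xc:
  assumes "compact (UNIV :: 'a::topological_space set)" "x \<in> FixInt \<sigma>" "cmod c = 1"
  shows "l1_continuous_on (C00' \<sigma>) (omega_xc \<sigma> (x :: 'a) c)"
proof (rule l1_continuous_on_if_norm_bounded)
  show "C00' \<sigma> \<subseteq> c00"
    by (auto simp: C00'_def)
  show "omega_xc \<sigma> x c b - omega_xc \<sigma> x c a = omega_xc \<sigma> x c (l1_diff b a)"
    if "a \<in> C00' \<sigma>" "b \<in> C00' \<sigma>" for a b
    using that omega_xc_l1_diff[OF assms(2)] by (simp add: C00'_def c00_def)
  show "cmod (omega_xc \<sigma> x c l) \<le> l1_norm l" if "l \<in> c00" for l
    by (rule norm_omega_xc_le_l1_norm[OF assms that])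
qed

theorem lemma3p7:
  fixes \<sigma> :: "'a::t2_space \<Rightarrow> 'a"
  assumes "compact (UNIV :: 'a set)"
    and "\<exists>g. homeomorphism UNIV UNIV \<sigma> g"
  shows "(\<forall>x. x \<notin> FixInt \<sigma> \<longrightarrow>
            is_hermitian_character \<sigma> (C00' \<sigma>) (omega_x x) \<and>
            l1_continuous_on (C00' \<sigma>) (omega_x x))
       \<and> (\<forall>x c. x \<in> FixInt \<sigma> \<and> c \<noteq> 0 \<longrightarrow>
            (l1_continuous_on (C00' \<sigma>) (omega_xc \<sigma> x c)
               \<longleftrightarrow> is_hermitian_character \<sigma> (C00' \<sigma>) (omega_xc \<sigma> x c)) \<and>
            (is_hermitian_character \<sigma> (C00' \<sigma>) (omega_xc \<sigma> x c) \<longleftrightarrow> cmod c = 1))"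
proof -
  obtain g where "homeomorphism UNIV UNIV \<sigma> g"
    using assms(2) ..
  then have "bij \<sigma>"
    unfolding homeomorphism_def by (metis bij_betw_byWitness subset_UNIV)
  then show ?thesis
    using hermitian_character_omega_x l1_continuous_omega_x[OF assms(1)]
      hermitian_character_omega_xc_iff[OF assms(1)]
      unimodular_if_l1_continuous_omega_xc[OF assms(1)] l1_continuous_omega_xc[OF assms(1)]
    by blast
qed

end
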